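(* Let $q=2$, $r\ge3$, $m=2r$, $D=\{x\in\mathbb{F}_{2^m}:\mathrm{Tr}_{2^r/2}(x^{2^r+1})=0\}$ and $\overline{\mathcal{C}_D}=\{(\mathrm{Tr}_{2^m/2}(bx)+c)_{x\in D}:b\in\mathbb{F}_{2^m},c\in\mathbb{F}_2\}$. Then $\overline{\mathcal{C}_D}$ has parameters $[2^{r-1}(2^r-1),\ m+1,\ 2^{r-1}(2^{r-1}-1)]$ and weight enumerator $$1+(2^{2r}-1)z^{2^{r-1}(2^{r-1}-1)}+(2^{2r}-1)z^{2^{2r-2}}+z^{2^{r-1}(2^r-1)}.$$ The dual $\overline{\mathcal{C}_D}^{\perp}$ has parameters $[2^{r-1}(2^r-1),\ 2^{r-1}(2^r-1)-m-1,\ 4]$. The minimum weight codewords of $\overline{\mathcal{C}_D}$ hold a $2$-$(2^{r-1}(2^r-1),\ 2^{r-1}(2^{r-1}-1),\ 2^{2r-2}-2^{r-1}-1)$ design, and the minimum weight codewords of $\overline{\mathcal{C}_D}^{\perp}$ hold a $2$-$(2^{r-1}(2^r-1),\ 4,\ 2^{2r-3}-2^{r-2}-1)$ design.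
   Context: A $t$-$(n,\kappa,\lambda)$ design is a pair $(\mathcal{P},\mathcal{B})$ where $|\mathcal{P}|=n$ and $\mathcal{B}$ is a set of $\kappa$-subsets of $\mathcal{P}$ such that every $t$-subset of $\mathcal{P}$ lies in exactly $\lambda$ members of $\mathcal{B}$. The codewords of weight $\kappa$ of a code of length $n$ hold a design if, with $\mathcal{P}$ the set of coordinate positions and $\mathcal{B}$ the set of supports $\{i:c_i\ne0\}$ of codewords of weight $\kappa$, $(\mathcal{P},\mathcal{B})$ is such a design. *)

theory Defs
  imports Main "HOL-Computational_Algebra.Polynomial"
begin

text \<open>Absolute trace from a field of order 2^k down to F_2 (F_2 = {0,1} inside the field).\<close>
definition tr :: "nat \<Rightarrow> 'a::field \<Rightarrow> 'a" where
  "tr k x = (\<Sum>i<k. x ^ (2 ^ i))"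

text \<open>Words of length |D|: coordinates indexed by the set D, entries in F_2 = {0,1},
  extended by 0 outside D.\<close>
definition bword :: "'a set \<Rightarrow> ('a \<Rightarrow> 'b::{zero,one}) \<Rightarrow> bool" where
  "bword D v \<longleftrightarrow> (\<forall>x\<in>D. v x \<in> {0, 1}) \<and> (\<forall>x. x \<notin> D \<longrightarrow> v x = 0)"

definition supp :: "'a set \<Rightarrow> ('a \<Rightarrow> 'b::zero) \<Rightarrow> 'a set" where
  "supp D c = {x \<in> D. c x \<noteq> 0}"

definition wt :: "'a set \<Rightarrow> ('a \<Rightarrow> 'b::zero) \<Rightarrow> nat" where
  "wt D c = card (supp D c)"

definition min_dist :: "'a set \<Rightarrow> ('a \<Rightarrow> 'b::zero) set \<Rightarrow> nat" where
  "min_dist D C = Min {wt D c | c. c \<in> C \<and> c \<noteq> (\<lambda>_. 0)}"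

text \<open>Binary linear code with parameters [n,k,d] on coordinate set D
  (dimension k over F_2, i.e. 2^k codewords).\<close>
definition has_params :: "'a set \<Rightarrow> ('a \<Rightarrow> 'b::{zero,one,plus}) set \<Rightarrow> nat \<Rightarrow> nat \<Rightarrow> nat \<Rightarrow> bool" where
  "has_params D C n k d \<longleftrightarrow> card D = n \<and> card C = 2 ^ k \<and> min_dist D C = d"

text \<open>Dual code (standard inner product over F_2, computed in the ambient field of char. 2).\<close>
definition dual_code :: "'a set \<Rightarrow> ('a \<Rightarrow> 'b::comm_ring_1) set \<Rightarrow> ('a \<Rightarrow> 'b) set" where
  "dual_code D C = {v. bword D v \<and> (\<forall>c\<in>C. (\<Sum>x\<in>D. v x * c x) = 0)}"

definition weight_enum :: "'a set \<Rightarrow> ('a \<Rightarrow> 'b::zero) set \<Rightarrow> int poly" where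
  "weight_enum D C = (\<Sum>c\<in>C. monom 1 (wt D c))"

definition is_design :: "'a set \<Rightarrow> 'a set set \<Rightarrow> nat \<Rightarrow> nat \<Rightarrow> nat \<Rightarrow> nat \<Rightarrow> bool" where
  "is_design P B t n \<kappa> lam \<longleftrightarrow> finite P \<and> card P = n \<and>
     (\<forall>b\<in>B. b \<subseteq> P \<and> card b = \<kappa>) \<and>
     (\<forall>T. T \<subseteq> P \<and> card T = t \<longrightarrow> card {b\<in>B. T \<subseteq> b} = lam)"

definition holds_design :: "'a set \<Rightarrow> ('a \<Rightarrow> 'b::zero) set \<Rightarrow> nat \<Rightarrow> nat \<Rightarrow> nat \<Rightarrow> nat \<Rightarrow> bool" where
  "holds_design D C t n \<kappa> lam \<longleftrightarrow>
     is_design D (supp D ` {c \<in> C. wt D c = \<kappa>}) t n \<kappa> lam"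

end

(*
  Let q = 2^r, so that the field F has q^2 elements. Then Q(x) = Tr_r(x^(q+1)) is a quadratic form
  over F_2 with nondegenerate polar form B(x, y) = Tr_m(x^q y), and D is its zero set; counting
  through the norm x \<mapsto> x^(q+1), which maps F^* onto F_q^* with fibres of size q + 1, gives |D|.
  For c \<noteq> 0 the translate D + c has |D| elements and agrees with D where B(c, -) = Q(c) and with
  its complement elsewhere, so D meets {B(c, -) \<noteq> Q(c)} in 2^(m-2) points and D \<inter> (D + c) has
  \<kappa> = |D| - 2^(m-2) points.

  Every codeword is x \<mapsto> B(u, x) + e on D, so the nonzero weights are |D|, 2^(m-2) and \<kappa>, and
  the supports of weight \<kappa> are the sets D \<inter> (D + u), u \<noteq> 0. Those containing x \<noteq> y
  correspond to the points w \<noteq> x of D \<inter> (D + x + y), whence \<lambda> = \<kappa> - 1.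
  The dual code consists of the indicators of the even zero-sum subsets of D. Its words of weight 4
  through x \<noteq> y are {x, y, z, z + x + y}, again counted by D \<inter> (D + x + y), and its size follows
  because translating by symmetric differences makes all 2^(m+1) combinations of sum and parity
  equally frequent among the subsets of D.
*)
theory Submission
  imports Defs "HOL-Computational_Algebra.Primes" "HOL-Library.Indicator_Function"
begin

section \<open>Characteristic two\<close>

text \<open>If \<open>2 \<noteq> 0\<close>, then \<open>x \<mapsto> -x\<close> pairs off the nonzero elements, so the order would be odd.\<close>
lemma CHAR_eq_2_if_card_UNIV_eq_power_2:
  assumes card_UNIV: "card (UNIV :: 'a::{field,finite} set) = 2 ^ m"
  shows "CHAR('a) = 2"
proof -
  have "card {0::'a, 1} \<le> card (UNIV :: 'a set)" by (rule card_mono) simp_all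
  then have "even (card (UNIV :: 'a set))" using card_UNIV by (cases m) auto
  have "(2::'a) = 0"
  proof (rule ccontr)
    assume "(2::'a) \<noteq> 0"
    then have neg: "x \<noteq> - x" if "x \<noteq> 0" for x :: 'a
      using that by (metis add_eq_0_iff mult_2 mult_eq_0_iff)
    define P where "P = (\<lambda>x::'a. {x, -x}) ` (UNIV - {0})"
    have pairs: "\<forall>c\<in>P. card c = 2" using neg unfolding P_def by auto
    have disjoint: "\<forall>c\<in>P. \<forall>c'\<in>P. c \<noteq> c' \<longrightarrow> c \<inter> c' = {}" unfolding P_def by auto
    have "2 * card P = card (\<Union>P)" by (rule card_partition) (use pairs disjoint in auto)
    also have "\<Union>P = UNIV - {0}" unfolding P_def by auto
    finally have "2 * card P = card (UNIV :: 'a set) - 1" by (simp add: card_Diff_singleton)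
    then have "even (card (UNIV :: 'a set) - 1)" by (metis dvd_triv_left)
    with \<open>even (card (UNIV :: 'a set))\<close> show False
      using finite_UNIV_card_ge_0[where 'a='a] by (cases "card (UNIV :: 'a set)") auto
  qed
  then have "CHAR('a) dvd 2" using of_nat_eq_0_iff_char_dvd[of 2, where 'a='a] by simp
  moreover have "CHAR('a) \<noteq> 1" using CHAR_not_1[where 'a='a] by simp
  ultimately show ?thesis using dvd_imp_le[of "CHAR('a)" 2] by (cases "CHAR('a)") (auto simp: le_Suc_eq)
qed

lemma add_self_CHAR_2:
  assumes "CHAR('a::ring_1) = 2"
  shows "x + x = (0::'a)"
  using uminus_CHAR_2[OF assms, of x] by (metis add.right_inverse)

lemma add_add_self_CHAR_2:
  assumes "CHAR('a::ring_1) = 2"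
  shows "x + y + y = (x::'a)"
  by (simp add: add.assoc add_self_CHAR_2[OF assms])

lemma add_eq_0_iff_CHAR_2:
  assumes "CHAR('a::ring_1) = 2"
  shows "x + y = 0 \<longleftrightarrow> x = (y::'a)"
  by (metis add_eq_0_iff uminus_CHAR_2[OF assms])

lemma of_nat_CHAR_2:
  assumes "CHAR('a::ring_1) = 2"
  shows "(of_nat k :: 'a) = (if even k then 0 else 1)"
proof (cases "even k")
  case False
  then obtain j where "k = Suc (2 * j)" by (metis oddE Suc_eq_plus1)
  then show ?thesis using assms of_nat_eq_0_iff_char_dvd[of "2 * j", where 'a='a] by simp
qed (use assms in \<open>simp add: of_nat_eq_0_iff_char_dvd\<close>)

lemma frobenius_add_CHAR_2:
  assumes "CHAR('a::comm_semiring_1) = 2"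
  shows "(x + y :: 'a) ^ 2 ^ i = x ^ 2 ^ i + y ^ 2 ^ i"
  by (rule freshmans_dream') (simp_all add: assms)

lemma frobenius_sum_CHAR_2:
  assumes "CHAR('a::comm_semiring_1) = 2"
  shows "(sum f A :: 'a) ^ 2 ^ i = (\<Sum>a\<in>A. f a ^ 2 ^ i)"
  by (rule freshmans_dream_sum') (simp_all add: assms)

lemma power_card_UNIV_eq_self:
  fixes x :: "'a::{field,finite}"
  shows "x ^ card (UNIV :: 'a set) = x"
proof (cases "x = 0")
  case False
  let ?U = "UNIV - {0::'a}"
  have "x ^ card ?U * (\<Prod>y\<in>?U. y) = (\<Prod>y\<in>?U. x * y)" by (simp add: prod.distrib)
  also have "\<dots> = (\<Prod>y\<in>?U. y)"
    by (rule prod.reindex_bij_witness[of _ "\<lambda>y. y / x" "\<lambda>y. x * y"]) (use False in auto)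
  finally have "x ^ card ?U * (\<Prod>y\<in>?U. y) = (\<Prod>y\<in>?U. y)" .
  moreover have "(\<Prod>y\<in>?U. y) \<noteq> 0" by simp
  ultimately have "x ^ card ?U = 1" by (metis mult_cancel_right2)
  moreover have "card (UNIV :: 'a set) = Suc (card ?U)"
    using finite_UNIV_card_ge_0[where 'a='a] by (simp add: card_Diff_singleton)
  ultimately show ?thesis by (metis power_Suc mult_1_right)
qed (use finite_UNIV_card_ge_0[where 'a='a] in auto)

lemma card_additive_fibres_eq:
  fixes g :: "'a::ring_1 \<Rightarrow> 'b::ring_1"
  assumes "CHAR('a) = 2" "CHAR('b) = 2" and "finite A"
    and add_closed: "\<And>x y. x \<in> A \<Longrightarrow> y \<in> A \<Longrightarrow> x + y \<in> A"
    and additive: "\<And>x y. g (x + y) = g x + g y"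
    and binary: "\<And>x. x \<in> A \<Longrightarrow> g x = 0 \<or> g x = 1"
    and "t \<in> A" "g t = 1"
  shows "card {x\<in>A. g x = 0} = card {x\<in>A. g x = 1}"
    and "card {x\<in>A. g x = 0} + card {x\<in>A. g x = 1} = card A"
proof -
  have "bij_betw (\<lambda>x. x + t) {x\<in>A. g x = 0} {x\<in>A. g x = 1}"
  proof (rule bij_betw_byWitness[where f'="\<lambda>x. x + t"])
    have "(1::'b) + 1 = 0" by (rule add_self_CHAR_2[OF assms(2)])
    then show "(\<lambda>x. x + t) ` {x\<in>A. g x = 0} \<subseteq> {x\<in>A. g x = 1}"
      "(\<lambda>x. x + t) ` {x\<in>A. g x = 1} \<subseteq> {x\<in>A. g x = 0}"
      using add_closed additive \<open>t \<in> A\<close> \<open>g t = 1\<close> by auto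
  qed (simp_all add: add_add_self_CHAR_2[OF assms(1)])
  then show "card {x\<in>A. g x = 0} = card {x\<in>A. g x = 1}" by (rule bij_betw_same_card)
  have "A = {x\<in>A. g x = 0} \<union> {x\<in>A. g x = 1}" using binary by auto
  moreover have "card ({x\<in>A. g x = 0} \<union> {x\<in>A. g x = 1}) = card {x\<in>A. g x = 0} + card {x\<in>A. g x = 1}"
    by (rule card_Un_disjoint) (use \<open>finite A\<close> in auto)
  ultimately show "card {x\<in>A. g x = 0} + card {x\<in>A. g x = 1} = card A" by simp
qed

section \<open>The absolute trace\<close>

lemma tr_0 [simp]: "tr k (0::'a::field) = 0"
  unfolding tr_def by (simp add: power_0_left)

lemma tr_add:
  assumes "CHAR('a::field) = 2"
  shows "tr k (x + y :: 'a) = tr k x + tr k y"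
  unfolding tr_def by (simp add: frobenius_add_CHAR_2[OF assms] sum.distrib)

lemma tr_sum:
  assumes "CHAR('a::field) = 2"
  shows "tr k (sum f A :: 'a) = (\<Sum>a\<in>A. tr k (f a))"
  unfolding tr_def frobenius_sum_CHAR_2[OF assms] by (rule sum.swap)

lemma tr_add_length: "tr (k + l) (x::'a::field) = tr k x + tr l (x ^ 2 ^ k)"
proof (induction l)
  case (Suc l)
  have "(x ^ 2 ^ k) ^ 2 ^ l = x ^ 2 ^ (k + l)" by (simp add: power_mult[symmetric] power_add)
  with Suc show ?case by (simp add: tr_def add.assoc)
qed (simp add: tr_def)

lemma tr_square:
  assumes "CHAR('a::field) = 2"
  shows "(tr k x) ^ 2 + x = tr k x + (x::'a) ^ 2 ^ k"
proof -
  have "(tr k x) ^ 2 = (\<Sum>i<k. x ^ 2 ^ Suc i)"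
    unfolding tr_def using frobenius_sum_CHAR_2[OF assms, of "\<lambda>i. x ^ 2 ^ i" "{..<k}" 1]
    by (simp add: power_mult[symmetric] mult.commute)
  moreover have "tr (Suc k) x = x + (\<Sum>i<k. x ^ 2 ^ Suc i)"
    unfolding tr_def by (subst sum.lessThan_Suc_shift) simp
  ultimately have "(tr k x) ^ 2 + x = tr (Suc k) x" by (simp add: add.commute)
  also have "\<dots> = tr k x + x ^ 2 ^ k" unfolding tr_def by simp
  finally show ?thesis .
qed

lemma tr_eq_0_or_1:
  assumes "CHAR('a::field) = 2" "x ^ 2 ^ k = (x::'a)"
  shows "tr k x = 0 \<or> tr k x = 1"
proof -
  have "tr k x * (tr k x - 1) = 0"
    using tr_square[OF assms(1), of k x] assms(2) by (simp add: power2_eq_square algebra_simps)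
  then show ?thesis by simp
qed

lemma card_tr_eq_0_le:
  assumes "k \<ge> 1"
  shows "card {x\<in>A. tr k (x::'a::field) = 0} \<le> 2 ^ (k - 1)"
proof -
  define p where "p = (\<Sum>i<k. monom (1::'a) (2 ^ i))"
  have "coeff p (2 ^ (k - 1)) = (\<Sum>i\<in>{k - 1}. 1)"
    unfolding p_def coeff_sum coeff_monom
    by (rule sum.mono_neutral_cong_right) (use assms in auto)
  then have "p \<noteq> 0" by auto
  have "degree p \<le> 2 ^ (k - 1)" unfolding p_def
    by (rule degree_sum_le) (auto intro!: order.trans[OF degree_monom_le] power_increasing)
  moreover have sub: "{x\<in>A. tr k x = 0} \<subseteq> {x. poly p x = 0}"
    unfolding p_def tr_def by (auto simp: poly_sum poly_monom)
  have "card {x\<in>A. tr k x = 0} \<le> card {x. poly p x = 0}"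
    by (rule card_mono[OF poly_roots_finite[OF \<open>p \<noteq> 0\<close>] sub])
  ultimately show ?thesis using card_poly_roots_bound[OF \<open>p \<noteq> 0\<close>] by simp
qed

text \<open>Being a polynomial of degree \<open>2 ^ (k - 1) < card A\<close>, the trace does not vanish on \<open>A\<close>;
  translation by an element of trace 1 then swaps its two fibres.\<close>
lemma card_tr_fibres:
  fixes A :: "'a::field set"
  assumes char: "CHAR('a) = 2" and "finite A"
    and add_closed: "\<And>x y. x \<in> A \<Longrightarrow> y \<in> A \<Longrightarrow> x + y \<in> A"
    and card_A: "card A = 2 ^ k" and "k \<ge> 1"
    and fixed: "\<And>x. x \<in> A \<Longrightarrow> x ^ 2 ^ k = x"
  shows "card {x\<in>A. tr k x = 0} = 2 ^ (k - 1)" and "card {x\<in>A. tr k x = 1} = 2 ^ (k - 1)"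
proof -
  have two_power: "(2::nat) ^ k = 2 * 2 ^ (k - 1)"
    using \<open>k \<ge> 1\<close> by (cases k) auto
  have "\<not> A \<subseteq> {x. tr k x = 0}"
  proof
    assume "A \<subseteq> {x. tr k x = 0}"
    then have "card A \<le> 2 ^ (k - 1)"
      using card_tr_eq_0_le[OF \<open>k \<ge> 1\<close>, of A] by (simp add: Int_absorb2 Collect_conj_eq)
    with card_A two_power show False by simp
  qed
  then obtain t where "t \<in> A" "tr k t = 1" using tr_eq_0_or_1[OF char fixed] by blast
  note fibres = card_additive_fibres_eq[OF char char \<open>finite A\<close> add_closed tr_add[OF char]
      tr_eq_0_or_1[OF char fixed] this]
  from fibres card_A two_power show "card {x\<in>A. tr k x = 0} = 2 ^ (k - 1)" by simp
  with fibres show "card {x\<in>A. tr k x = 1} = 2 ^ (k - 1)" by simp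
qed

lemma card_tr_mult_fibres:
  assumes card_UNIV: "card (UNIV :: 'a::{field,finite} set) = 2 ^ k" and "k \<ge> 1"
    and "c \<noteq> 0" and "e = 0 \<or> e = 1"
  shows "card {x::'a. tr k (c * x) = e} = 2 ^ (k - 1)"
proof -
  have char: "CHAR('a) = 2" by (rule CHAR_eq_2_if_card_UNIV_eq_power_2[OF card_UNIV])
  have "bij_betw (\<lambda>x. c * x) {x. tr k (c * x) = e} {y. tr k y = e}"
    by (rule bij_betw_byWitness[where f'="\<lambda>y. y / c"]) (use \<open>c \<noteq> 0\<close> in auto)
  then have "card {x::'a. tr k (c * x) = e} = card {y::'a\<in>UNIV. tr k y = e}"
    by (simp add: bij_betw_same_card)
  also have "\<dots> = 2 ^ (k - 1)"
  proof -
    have "x ^ 2 ^ k = x" for x :: 'a using power_card_UNIV_eq_self[of x] card_UNIV by simp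
    with \<open>e = 0 \<or> e = 1\<close> show ?thesis
      using card_tr_fibres[OF char finite _ card_UNIV \<open>k \<ge> 1\<close>] by auto
  qed
  finally show ?thesis .
qed

lemma tr_mult_nondegenerate:
  assumes "card (UNIV :: 'a::{field,finite} set) = 2 ^ k" and "k \<ge> 1"
    and "\<And>b. tr k (b * s) = 0"
  shows "s = (0::'a)"
proof (rule ccontr)
  assume "s \<noteq> 0"
  then have "card {b::'a. tr k (s * b) = 1} > 0"
    using card_tr_mult_fibres[OF assms(1,2)] by simp
  then have "{b::'a. tr k (s * b) = 1} \<noteq> {}" by (metis card.empty less_irrefl)
  then obtain b where "tr k (s * b) = 1" by blast
  with assms(3)[of b] show False by (simp add: mult.commute)
qed

section \<open>Binary words and even zero-sum sets\<close>

lemma supp_indicator: "S \<subseteq> D \<Longrightarrow> supp D (indicator S :: 'a \<Rightarrow> 'b::zero_neq_one) = S"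
  unfolding supp_def by (auto simp: indicator_eq_0_iff)

lemma wt_indicator: "S \<subseteq> D \<Longrightarrow> wt D (indicator S :: 'a \<Rightarrow> 'b::zero_neq_one) = card S"
  unfolding wt_def by (simp add: supp_indicator)

lemma bword_indicator: "S \<subseteq> D \<Longrightarrow> bword D (indicator S :: 'a \<Rightarrow> 'b::zero_neq_one)"
  unfolding bword_def by (auto simp: indicator_def)

lemma bword_eq_indicator_supp:
  "bword D v \<Longrightarrow> v = (indicator (supp D v) :: 'a \<Rightarrow> 'b::zero_neq_one)"
  unfolding bword_def supp_def indicator_def by fastforce

lemma inj_on_supp_bword: "inj_on (supp D) {v :: 'a \<Rightarrow> 'b::zero_neq_one. bword D v}"
  by (rule inj_onI) (metis bword_eq_indicator_supp mem_Collect_eq)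

lemma sum_sym_diff_CHAR_2:
  fixes f :: "'a \<Rightarrow> 'b::ring_1"
  assumes "CHAR('b) = 2" "finite S" "finite T"
  shows "sum f (sym_diff S T) = sum f S + sum f T"
proof -
  have "sum f S = sum f (S \<inter> T) + sum f (S - T)" "sum f T = sum f (S \<inter> T) + sum f (T - S)"
    using assms(2,3) sum.Int_Diff[of S f T] sum.Int_Diff[of T f S] by (simp_all add: Int_commute)
  moreover have "sum f (sym_diff S T) = sum f (S - T) + sum f (T - S)"
    using assms(2,3) by (intro sum.union_disjoint) auto
  ultimately show ?thesis
    using add_self_CHAR_2[OF assms(1), of "sum f (S \<inter> T)"] by (simp add: algebra_simps)
qed

definition even_zero_sum_subsets :: "'a::comm_monoid_add set \<Rightarrow> 'a set set" where
  "even_zero_sum_subsets D = {S. S \<subseteq> D \<and> even (card S) \<and> \<Sum>S = 0}"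

lemma card_even_zero_sum_ge_4:
  assumes "CHAR('a::ring_1) = 2" "finite S" "S \<in> even_zero_sum_subsets (D::'a set)" "S \<noteq> {}"
  shows "card S \<ge> 4"
proof -
  have "even (card S)" and zero_sum: "\<Sum>S = 0"
    using assms(3) unfolding even_zero_sum_subsets_def by auto
  moreover have "card S \<noteq> 0" using assms(2,4) by simp
  moreover have "card S \<noteq> 2"
  proof
    assume "card S = 2"
    then obtain x y where "S = {x, y}" "x \<noteq> y" by (meson card_2_iff)
    with zero_sum show False using add_eq_0_iff_CHAR_2[OF assms(1)] by simp
  qed
  ultimately show ?thesis by presburger
qed

lemma even_zero_sum_card_4_eq:
  assumes char: "CHAR('a::ring_1) = 2" and S: "S \<in> even_zero_sum_subsets (D::'a set)" "card S = 4"
    and xyz: "x \<in> S" "y \<in> S" "z \<in> S" "x \<noteq> y" "z \<noteq> x" "z \<noteq> y"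
  shows "S = {x, y, z, z + (x + y)}"
proof -
  have "finite S" using S(2) by (simp add: card_ge_0_finite)
  then have "card (S - {x, y, z}) = 1" using S(2) xyz by (simp add: card_Diff_subset)
  then obtain w where w: "S - {x, y, z} = {w}" by (metis One_nat_def card_1_singletonE)
  then have S_eq: "S = {x, y, z, w}" and "w \<noteq> x" "w \<noteq> y" "w \<noteq> z" using xyz by auto
  with S(1) xyz have "x + y + z + w = 0"
    unfolding even_zero_sum_subsets_def by (simp add: add.assoc)
  then have "w = z + (x + y)" using add_eq_0_iff_CHAR_2[OF char] by (simp add: algebra_simps)
  with S_eq show ?thesis by simp
qed

text \<open>The four-element zero-sum sets through \<open>x \<noteq> y\<close> are the sets \<open>{x, y, z, z + (x + y)}\<close>, so they
  correspond to the unordered pairs \<open>{z, z + (x + y)}\<close> in \<open>D - {x, y}\<close>.\<close>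
lemma card_even_zero_sum_4_through_pair:
  fixes D :: "'a::ring_1 set"
  assumes char: "CHAR('a) = 2" and "finite D" and xy: "x \<in> D" "y \<in> D" "x \<noteq> y"
  shows "2 * card {S \<in> even_zero_sum_subsets D. card S = 4 \<and> {x, y} \<subseteq> S}
           = card {z\<in>D. z + (x + y) \<in> D} - 2"
proof -
  define s where "s = x + y"
  define blocks where "blocks = {S \<in> even_zero_sum_subsets D. card S = 4 \<and> {x, y} \<subseteq> S}"
  have shift_x: "x + s = y" and shift_y: "y + s = x"
    unfolding s_def by (metis add.commute add_add_self_CHAR_2[OF char])+
  have "s \<noteq> 0" unfolding s_def using xy(3) add_eq_0_iff_CHAR_2[OF char, of x y] by simp
  have block_eq: "S = {x, y, z, z + s}" if "S \<in> blocks" "z \<in> S - {x, y}" for S z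
    using even_zero_sum_card_4_eq[OF char, of S D x y z] that xy(3) unfolding blocks_def s_def by auto
  have union: "{z\<in>D. z + s \<in> D} - {x, y} = (\<Union>S\<in>blocks. S - {x, y})"
  proof (intro equalityI subsetI)
    fix z assume z: "z \<in> {z\<in>D. z + s \<in> D} - {x, y}"
    define w where "w = z + s"
    have "x \<noteq> w" "y \<noteq> w"
      unfolding w_def using z shift_x shift_y add_add_self_CHAR_2[OF char, of z s] by auto
    moreover have "z \<noteq> w" unfolding w_def using \<open>s \<noteq> 0\<close> by simp
    moreover have "x \<noteq> z" "y \<noteq> z" using z by auto
    ultimately have "card {x, y, z, w} = 4" "\<Sum>{x, y, z, w} = x + (y + (z + w))"
      using xy(3) by simp_all
    moreover have "x + (y + (z + w)) = (x + y) + (x + y) + (z + z)"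
      unfolding w_def s_def by (simp add: algebra_simps)
    ultimately have "{x, y, z, w} \<in> blocks"
      using z xy add_self_CHAR_2[OF char] unfolding blocks_def even_zero_sum_subsets_def w_def
      by simp
    then show "z \<in> (\<Union>S\<in>blocks. S - {x, y})" using z by blast
  next
    fix z assume "z \<in> (\<Union>S\<in>blocks. S - {x, y})"
    then obtain S where "S \<in> blocks" "z \<in> S - {x, y}" by blast
    moreover from this have "S \<subseteq> D" unfolding blocks_def even_zero_sum_subsets_def by simp
    ultimately show "z \<in> {z\<in>D. z + s \<in> D} - {x, y}" using block_eq by blast
  qed
  have "blocks \<subseteq> Pow D" unfolding blocks_def even_zero_sum_subsets_def by auto
  then have "finite blocks" using \<open>finite D\<close> by (simp add: finite_subset)
  then have "card (\<Union>S\<in>blocks. S - {x, y}) = (\<Sum>S\<in>blocks. card (S - {x, y}))"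
  proof (rule card_UN_disjoint)
    show "\<forall>S\<in>blocks. finite (S - {x, y})"
      using \<open>blocks \<subseteq> Pow D\<close> \<open>finite D\<close> by (meson PowD finite_Diff finite_subset subsetD)
    show "\<forall>S\<in>blocks. \<forall>S'\<in>blocks. S \<noteq> S' \<longrightarrow> (S - {x, y}) \<inter> (S' - {x, y}) = {}"
      using block_eq by (metis disjoint_iff)
  qed
  also have "\<dots> = (\<Sum>S\<in>blocks. 2)"
    by (rule sum.cong) (auto simp: blocks_def card_Diff_subset card_ge_0_finite xy(3))
  finally have "card ({z\<in>D. z + s \<in> D} - {x, y}) = 2 * card blocks" by (simp add: union)
  moreover have "{x, y} \<subseteq> {z\<in>D. z + s \<in> D}" using xy shift_x shift_y by auto
  ultimately show ?thesis
    using xy(3) \<open>finite D\<close> unfolding blocks_def s_def by (simp add: card_Diff_subset)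
qed

section \<open>Trace codes and their duals\<close>

definition trace_code :: "nat \<Rightarrow> 'a::field set \<Rightarrow> ('a \<Rightarrow> 'a) set" where
  "trace_code m D = {(\<lambda>x. if x \<in> D then tr m (b * x) + c else 0) | b c. c \<in> {0, 1}}"

locale binary_trace_code =
  fixes m :: nat and D :: "'a::{field,finite} set"
  assumes card_UNIV: "card (UNIV :: 'a set) = 2 ^ m"
begin

lemma CHAR_2: "CHAR('a) = 2"
  by (rule CHAR_eq_2_if_card_UNIV_eq_power_2[OF card_UNIV])

lemma m_ge_1: "m \<ge> 1"
proof -
  have "card {0::'a, 1} \<le> card (UNIV :: 'a set)" by (rule card_mono) simp_all
  then show ?thesis using card_UNIV by (cases m) auto
qed

lemma of_nat_eq_0_iff_even: "(of_nat n :: 'a) = 0 \<longleftrightarrow> even n"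
  using of_nat_eq_0_iff_char_dvd[of n, where 'a='a] CHAR_2 by simp

lemma inner_indicator_trace_word:
  assumes "S \<subseteq> D" and "w = (\<lambda>x. if x \<in> D then tr m (b * x) + c else 0)"
  shows "(\<Sum>x\<in>D. indicator S x * w x) = tr m (b * \<Sum>S) + of_nat (card S) * c"
proof -
  have "(\<Sum>x\<in>D. indicator S x * w x) = (\<Sum>x\<in>S. tr m (b * x) + c)"
    using assms by (simp add: indicator_def sum.If_cases Int_absorb1)
  also have "\<dots> = tr m (b * \<Sum>S) + of_nat (card S) * c"
    by (simp add: sum.distrib sum_distrib_left tr_sum[OF CHAR_2])
  finally show ?thesis .
qed

theorem dual_trace_code: "dual_code D (trace_code m D) = indicator ` even_zero_sum_subsets D"
proof (intro equalityI subsetI)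
  fix v assume v: "v \<in> dual_code D (trace_code m D)"
  define S where "S = supp D v"
  have "S \<subseteq> D" unfolding S_def supp_def by auto
  have v_eq: "v = indicator S"
    unfolding S_def using v by (simp add: dual_code_def bword_eq_indicator_supp)
  have orth: "tr m (b * \<Sum>S) + of_nat (card S) * c = 0" if "c \<in> {0, 1}" for b c
  proof -
    define w where "w = (\<lambda>x. if x \<in> D then tr m (b * x) + c else 0)"
    have "w \<in> trace_code m D" unfolding trace_code_def w_def using that by blast
    with v have "(\<Sum>x\<in>D. v x * w x) = 0" unfolding dual_code_def by blast
    then show ?thesis using inner_indicator_trace_word[OF \<open>S \<subseteq> D\<close> w_def] v_eq by simp
  qed
  have "even (card S)" using orth[of 1 0] of_nat_eq_0_iff_even by simp
  moreover have "\<Sum>S = 0"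
    using tr_mult_nondegenerate[OF card_UNIV m_ge_1] orth[of 0] by (simp add: mult.commute)
  ultimately have "S \<in> even_zero_sum_subsets D"
    unfolding even_zero_sum_subsets_def using \<open>S \<subseteq> D\<close> by simp
  then show "v \<in> indicator ` even_zero_sum_subsets D" using v_eq by simp
next
  fix v :: "'a \<Rightarrow> 'a" assume "v \<in> indicator ` even_zero_sum_subsets D"
  then obtain S where S: "S \<subseteq> D" "even (card S)" "\<Sum>S = 0" and v_eq: "v = indicator S"
    unfolding even_zero_sum_subsets_def by blast
  have "(\<Sum>x\<in>D. v x * w x) = 0" if "w \<in> trace_code m D" for w
  proof -
    from that obtain b c where "w = (\<lambda>x. if x \<in> D then tr m (b * x) + c else 0)"
      unfolding trace_code_def by blast
    then show ?thesis
      using inner_indicator_trace_word[OF S(1)] S(2,3) of_nat_eq_0_iff_even v_eq by simp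
  qed
  then show "v \<in> dual_code D (trace_code m D)"
    unfolding dual_code_def using bword_indicator[OF S(1)] v_eq by simp
qed

text \<open>Symmetric difference with \<open>S\<^sub>0\<close> maps the even zero-sum sets onto the subsets of \<open>D\<close>
  with the sum and the parity of \<open>S\<^sub>0\<close>.\<close>
lemma card_subsets_with_sum_and_parity:
  assumes "S\<^sub>0 \<subseteq> D"
  shows "card {S. S \<subseteq> D \<and> \<Sum>S = \<Sum>S\<^sub>0 \<and> (of_nat (card S) :: 'a) = of_nat (card S\<^sub>0)}
           = card (even_zero_sum_subsets D)"
proof -
  have sum_sd: "sum f (sym_diff S\<^sub>0 S) = sum f S\<^sub>0 + sum f S" for S and f :: "'a \<Rightarrow> 'a"
    by (rule sum_sym_diff_CHAR_2[OF CHAR_2 finite finite])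
  have card_sd: "(of_nat (card (sym_diff S\<^sub>0 S)) :: 'a) = of_nat (card S\<^sub>0) + of_nat (card S)" for S
    using sum_sd[of "\<lambda>_. 1"] by simp
  have "bij_betw (sym_diff S\<^sub>0) (even_zero_sum_subsets D)
          {S. S \<subseteq> D \<and> \<Sum>S = \<Sum>S\<^sub>0 \<and> (of_nat (card S) :: 'a) = of_nat (card S\<^sub>0)}"
  proof (rule bij_betw_byWitness[where f'="sym_diff S\<^sub>0"])
    show "sym_diff S\<^sub>0 ` even_zero_sum_subsets D
            \<subseteq> {S. S \<subseteq> D \<and> \<Sum>S = \<Sum>S\<^sub>0 \<and> (of_nat (card S) :: 'a) = of_nat (card S\<^sub>0)}"
      using assms sum_sd[of "\<lambda>x. x"] card_sd of_nat_eq_0_iff_even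
      unfolding even_zero_sum_subsets_def by auto
  next
    show "sym_diff S\<^sub>0 ` {S. S \<subseteq> D \<and> \<Sum>S = \<Sum>S\<^sub>0 \<and> (of_nat (card S) :: 'a) = of_nat (card S\<^sub>0)}
            \<subseteq> even_zero_sum_subsets D"
    proof (intro image_subsetI)
      fix S assume S: "S \<in> {S. S \<subseteq> D \<and> \<Sum>S = \<Sum>S\<^sub>0 \<and> (of_nat (card S) :: 'a) = of_nat (card S\<^sub>0)}"
      then have "\<Sum>(sym_diff S\<^sub>0 S) = 0" "(of_nat (card (sym_diff S\<^sub>0 S)) :: 'a) = 0"
        using sum_sd[of "\<lambda>x. x" S] card_sd[of S] add_self_CHAR_2[OF CHAR_2] by auto
      with S assms show "sym_diff S\<^sub>0 S \<in> even_zero_sum_subsets D"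
        unfolding even_zero_sum_subsets_def of_nat_eq_0_iff_even by auto
    qed
  qed auto
  then show ?thesis by (simp add: bij_betw_same_card)
qed

lemma ex_subset_with_sum_and_parity:
  assumes "0 \<in> D" and sums_of_pairs: "\<And>s. s \<noteq> 0 \<Longrightarrow> \<exists>z\<in>D. z + s \<in> D"
    and "e = 0 \<or> e = 1"
  obtains S where "S \<subseteq> D" "\<Sum>S = a" "(of_nat (card S) :: 'a) = e"
proof -
  obtain S\<^sub>0 where S\<^sub>0: "S\<^sub>0 \<subseteq> D" "\<Sum>S\<^sub>0 = a" "(of_nat (card S\<^sub>0) :: 'a) = 0"
  proof (cases "a = 0")
    case True
    then show ?thesis using that[of "{}"] by simp
  next
    case False
    then obtain z where "z \<in> D" "z + a \<in> D" using sums_of_pairs by blast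
    then have "{z, z + a} \<subseteq> D" by simp
    moreover have "z \<noteq> z + a" using False by simp
    moreover have "z + (z + a) = a" by (simp add: add.assoc[symmetric] add_self_CHAR_2[OF CHAR_2])
    moreover have "(2::'a) = 0" using of_nat_eq_0_iff_even[of 2] by simp
    ultimately show ?thesis by (intro that[of "{z, z + a}"]) simp_all
  qed
  from \<open>e = 0 \<or> e = 1\<close> show ?thesis
  proof
    assume "e = 0"
    with S\<^sub>0 show ?thesis using that by blast
  next
    assume "e = 1"
    have "\<Sum>(sym_diff {0} S\<^sub>0) = a" "(of_nat (card (sym_diff {0} S\<^sub>0)) :: 'a) = 1"
      using sum_sym_diff_CHAR_2[OF CHAR_2, of "{0}" S\<^sub>0 "\<lambda>x. x"]
        sum_sym_diff_CHAR_2[OF CHAR_2, of "{0}" S\<^sub>0 "\<lambda>_. 1"] S\<^sub>0 by simp_all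
    moreover have "sym_diff {0} S\<^sub>0 \<subseteq> D" using \<open>0 \<in> D\<close> S\<^sub>0(1) by blast
    ultimately show ?thesis using that \<open>e = 1\<close> by blast
  qed
qed

text \<open>The subsets of \<open>D\<close> fall into \<open>2 ^ (m + 1)\<close> classes according to their sum and parity;
  each class is nonempty, hence equinumerous with the class of the empty set.\<close>
lemma card_even_zero_sum_subsets:
  assumes "0 \<in> D" and "\<And>s. s \<noteq> 0 \<Longrightarrow> \<exists>z\<in>D. z + s \<in> D"
  shows "card (even_zero_sum_subsets D) = 2 ^ (card D - m - 1)"
proof -
  define fibre where "fibre p = {S. S \<subseteq> D \<and> \<Sum>S = fst p \<and> (of_nat (card S) :: 'a) = snd p}" for p
  have card_fibre: "card (fibre p) = card (even_zero_sum_subsets D)" if "p \<in> UNIV \<times> {0, 1}" for p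
  proof -
    have "snd p = 0 \<or> snd p = 1" using that by auto
    then obtain S where "S \<subseteq> D" "\<Sum>S = fst p" "(of_nat (card S) :: 'a) = snd p"
      using ex_subset_with_sum_and_parity[OF assms] by blast
    then show ?thesis unfolding fibre_def using card_subsets_with_sum_and_parity[of S] by simp
  qed
  have "Pow D = (\<Union>p\<in>UNIV \<times> {0, 1}. fibre p)"
  proof (intro equalityI subsetI)
    fix S assume "S \<in> Pow D"
    then have "S \<in> fibre (\<Sum>S, of_nat (card S))" unfolding fibre_def by simp
    moreover have "(\<Sum>S, (of_nat (card S) :: 'a)) \<in> UNIV \<times> {0, 1}"
      using of_nat_CHAR_2[OF CHAR_2, of "card S"] by simp
    ultimately show "S \<in> (\<Union>p\<in>UNIV \<times> {0, 1}. fibre p)" by blast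
  qed (auto simp: fibre_def)
  moreover have "card (\<Union>p\<in>UNIV \<times> {0, 1}. fibre p) = (\<Sum>p\<in>UNIV \<times> {0::'a, 1}. card (fibre p))"
    by (rule card_UN_disjoint) (auto simp: fibre_def)
  ultimately have "card (Pow D) = (\<Sum>p\<in>UNIV \<times> {0::'a, 1}. card (fibre p))" by simp
  also have "\<dots> = 2 ^ (m + 1) * card (even_zero_sum_subsets D)"
    using card_fibre card_UNIV by (simp add: card_cartesian_product)
  finally have count: "2 ^ card D = 2 ^ (m + 1) * card (even_zero_sum_subsets D)"
    by (simp add: card_Pow)
  have "{} \<in> even_zero_sum_subsets D" unfolding even_zero_sum_subsets_def by simp
  then have "card (even_zero_sum_subsets D) \<ge> 1" by (auto simp: Suc_le_eq card_gt_0_iff)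
  with count have "(2::nat) ^ (m + 1) \<le> 2 ^ card D" by simp
  then have "m + 1 \<le> card D" using power_increasing_iff[of "2::nat" "m + 1"] by simp
  then have "(2::nat) ^ card D = 2 ^ (m + 1) * 2 ^ (card D - m - 1)"
    by (metis le_add_diff_inverse diff_diff_left power_add)
  with count show ?thesis by simp
qed

lemma supp_weight_4_dual_trace_code:
  "supp D ` {v \<in> dual_code D (trace_code m D). wt D v = 4}
     = {S \<in> even_zero_sum_subsets D. card S = 4}"
proof (intro equalityI subsetI)
  fix T assume "T \<in> supp D ` {v \<in> dual_code D (trace_code m D). wt D v = 4}"
  then obtain S where "S \<in> even_zero_sum_subsets D" "wt D (indicator S :: 'a \<Rightarrow> 'a) = 4"
    "T = supp D (indicator S :: 'a \<Rightarrow> 'a)"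
    unfolding dual_trace_code by blast
  moreover from this have "S \<subseteq> D" unfolding even_zero_sum_subsets_def by simp
  ultimately show "T \<in> {S \<in> even_zero_sum_subsets D. card S = 4}"
    by (simp add: supp_indicator wt_indicator)
next
  fix S assume S: "S \<in> {S \<in> even_zero_sum_subsets D. card S = 4}"
  then have "S \<subseteq> D" unfolding even_zero_sum_subsets_def by simp
  then have "S = supp D (indicator S :: 'a \<Rightarrow> 'a)" "wt D (indicator S :: 'a \<Rightarrow> 'a) = 4"
    using S by (simp_all add: supp_indicator wt_indicator)
  moreover have "(indicator S :: 'a \<Rightarrow> 'a) \<in> dual_code D (trace_code m D)"
    unfolding dual_trace_code using S by blast
  ultimately show "S \<in> supp D ` {v \<in> dual_code D (trace_code m D). wt D v = 4}" by blast
qed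

lemma min_dist_dual_trace_code:
  assumes "\<exists>S\<in>even_zero_sum_subsets D. card S = 4"
  shows "min_dist D (dual_code D (trace_code m D)) = 4"
proof -
  have sub: "S \<subseteq> D" if "S \<in> even_zero_sum_subsets D" for S
    using that unfolding even_zero_sum_subsets_def by simp
  have "indicator S \<noteq> (\<lambda>_. 0 :: 'a) \<longleftrightarrow> S \<noteq> {}" for S :: "'a set"
    by (auto simp: fun_eq_iff indicator_eq_0_iff)
  then have "{wt D c | c. c \<in> dual_code D (trace_code m D) \<and> c \<noteq> (\<lambda>_. 0)}
      = (\<lambda>S. wt D (indicator S :: 'a \<Rightarrow> 'a)) ` (even_zero_sum_subsets D - {{}})"
    unfolding dual_trace_code by blast
  also have "\<dots> = card ` (even_zero_sum_subsets D - {{}})"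
    by (rule image_cong) (simp_all add: sub wt_indicator)
  finally have weights: "{wt D c | c. c \<in> dual_code D (trace_code m D) \<and> c \<noteq> (\<lambda>_. 0)}
      = card ` (even_zero_sum_subsets D - {{}})" .
  have "finite (even_zero_sum_subsets D)" by simp
  moreover have "card S \<ge> 4" if "S \<in> even_zero_sum_subsets D - {{}}" for S
    using card_even_zero_sum_ge_4[OF CHAR_2, of S D] that by simp
  moreover have "4 \<in> card ` (even_zero_sum_subsets D - {{}})" using assms by force
  ultimately have "Min (card ` (even_zero_sum_subsets D - {{}})) = 4"
    by (intro Min_eqI) auto
  then show ?thesis unfolding min_dist_def weights .
qed

end

section \<open>The quadric \<open>Tr(x\<^sup>q\<^sup>+\<^sup>1) = 0\<close>\<close>

lemma card_roots_power_le:
  assumes "n \<ge> 1"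
  shows "card {x::'a::field. x ^ n = c} \<le> n"
proof -
  define p where "p = monom (1::'a) n - [:c:]"
  have "coeff p n = 1" using assms unfolding p_def by (simp add: coeff_pCons split: nat.split)
  then have "p \<noteq> 0" by auto
  moreover have "degree p \<le> n" unfolding p_def
    by (metis degree_diff_le degree_monom_le degree_pCons_0 le0)
  moreover have "{x. x ^ n = c} = {x. poly p x = 0}" unfolding p_def by (auto simp: poly_monom)
  ultimately show ?thesis using card_poly_roots_bound[of p] by simp
qed

lemma nat_mult_eq_imp_eq_if_le:
  fixes a b c d :: nat
  assumes "a \<le> c" "b \<le> d" "a * b = c * d" "c * d > 0"
  shows "a = c" and "b = d"
proof -
  have "a * b \<le> c * b" "c * b \<le> c * d" using assms(1,2) by simp_all
  then have "c * b = c * d" using assms(3) by linarith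
  then show "b = d" using assms(4) by simp
  then show "a = c" using assms(3,4) by simp
qed

text \<open>With \<open>q = 2 ^ r\<close>, the field \<open>'a\<close> has \<open>q\<^sup>2\<close> elements, \<open>K\<close> is its subfield of order \<open>q\<close>,
  \<open>Q\<close> is the trace of the norm \<open>x\<^sup>q\<^sup>+\<^sup>1\<close> to \<open>K\<close>, and \<open>B\<close> is the polar form of \<open>Q\<close>.\<close>
locale trace_quadric = binary_trace_code m D for m and D :: "'a::{field,finite} set" +
  fixes r :: nat
  assumes m_eq: "m = 2 * r"
    and D_def: "D = {x. tr r (x ^ (2 ^ r + 1)) = 0}"
begin

abbreviation q :: nat where "q \<equiv> 2 ^ r"

definition Q :: "'a \<Rightarrow> 'a" where "Q x = tr r (x ^ (q + 1))"

definition B :: "'a \<Rightarrow> 'a \<Rightarrow> 'a" where "B x y = tr m (x ^ q * y)"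

definition K :: "'a set" where "K = {y. y ^ q = y}"

lemma D_eq: "D = {x. Q x = 0}"
  unfolding D_def Q_def ..

lemma r_ge_1: "r \<ge> 1"
  using m_ge_1 m_eq by simp

lemma one_less_q: "1 < q"
  using r_ge_1 by (intro one_less_power) auto

lemma card_UNIV_eq_q_mult_q: "card (UNIV :: 'a set) = q * q"
  using card_UNIV m_eq by (simp add: mult_2 power_add)

lemma q_eq: "q = 2 * 2 ^ (r - 1)"
  using r_ge_1 by (cases r) simp_all

lemma power_q_power_q: "(x ^ q) ^ q = (x::'a)"
  using power_card_UNIV_eq_self[of x] card_UNIV m_eq by (simp flip: power_mult power_add add: mult_2)

lemma power_q_add: "(x + y) ^ q = x ^ q + (y::'a) ^ q"
  by (rule frobenius_add_CHAR_2[OF CHAR_2])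

lemma tr_m_eq: "tr m z = tr r z + tr r ((z::'a) ^ q)"
  using tr_add_length[of r r z] m_eq by (simp add: mult_2)

lemma tr_m_eq_0_or_1: "tr m (z::'a) = 0 \<or> tr m z = 1"
  by (rule tr_eq_0_or_1[OF CHAR_2]) (use power_card_UNIV_eq_self[of z] card_UNIV in simp)

lemma norm_in_K: "x ^ (q + 1) \<in> K"
  unfolding K_def by (simp add: power_mult_distrib power_q_power_q mult.commute)

lemma Q_eq_0_or_1: "Q x = 0 \<or> Q x = 1"
  unfolding Q_def by (rule tr_eq_0_or_1[OF CHAR_2]) (use norm_in_K in \<open>simp add: K_def\<close>)

lemma Q_add_1_eq_0_or_1: "Q x + 1 = 0 \<or> Q x + 1 = 1"
  and Q_add_1_neq_Q: "Q x + 1 \<noteq> Q x"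
  using Q_eq_0_or_1[of x] add_self_CHAR_2[OF CHAR_2, of 1] by auto

lemma eq_Q_add_1_iff: "e = 0 \<or> e = 1 \<Longrightarrow> e = Q x + 1 \<longleftrightarrow> e \<noteq> Q x"
  using Q_eq_0_or_1[of x] add_self_CHAR_2[OF CHAR_2, of 1] by auto

lemma B_eq_0_or_1: "B x y = 0 \<or> B x y = 1"
  unfolding B_def by (rule tr_m_eq_0_or_1)

lemma Q_0 [simp]: "Q 0 = 0"
  unfolding Q_def by (simp add: power_0_left)

lemma B_0_left [simp]: "B 0 y = 0"
  unfolding B_def by (simp add: power_0_left)

lemma Q_add: "Q (x + y) = Q x + Q y + B x y"
proof -
  have "(x + y) ^ (q + 1) = x ^ (q + 1) + y ^ (q + 1) + (x ^ q * y + (x ^ q * y) ^ q)"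
    using power_q_power_q[of x] by (simp add: power_q_add power_mult_distrib algebra_simps)
  then show ?thesis
    unfolding Q_def B_def tr_m_eq by (simp add: tr_add[OF CHAR_2])
qed

lemma B_comm: "B x y = B y x"
  using Q_add[of x y] Q_add[of y x] by (simp add: add.commute)

lemma B_add_left: "B (x + y) z = B x z + B y z"
  unfolding B_def by (simp add: power_q_add distrib_right tr_add[OF CHAR_2])

lemma card_B_fibre:
  assumes "c \<noteq> 0" "e = 0 \<or> e = 1"
  shows "card {x. B c x = e} = 2 ^ (m - 1)"
  unfolding B_def using card_tr_mult_fibres[OF card_UNIV m_ge_1 _ assms(2)] assms(1) by simp

lemma norm_fibre_eq:
  assumes "x\<^sub>0 \<noteq> 0"
  shows "{x::'a. x ^ (q + 1) = x\<^sub>0 ^ (q + 1)} = (\<lambda>k. x\<^sub>0 * k) ` {k. k ^ (q + 1) = 1}"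
proof (intro equalityI subsetI)
  fix x :: 'a assume "x \<in> {x. x ^ (q + 1) = x\<^sub>0 ^ (q + 1)}"
  then have "(x / x\<^sub>0) ^ (q + 1) = 1" "x = x\<^sub>0 * (x / x\<^sub>0)" using assms by (simp_all add: power_divide)
  then show "x \<in> (\<lambda>k. x\<^sub>0 * k) ` {k. k ^ (q + 1) = 1}" by blast
qed (auto simp: power_mult_distrib)

lemma K_minus_0_eq: "K - {0} = {y. y ^ (q - 1) = 1}"
proof -
  have "y ^ q = y \<longleftrightarrow> y = 0 \<or> y ^ (q - 1) = 1" for y :: 'a
  proof -
    have "y ^ q = y * y ^ (q - 1)" by (simp flip: power_Suc)
    then show ?thesis by auto
  qed
  then show ?thesis unfolding K_def using one_less_q by (auto simp: power_0_left)
qed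

text \<open>The norm \<open>x \<mapsto> x\<^sup>q\<^sup>+\<^sup>1\<close> maps \<open>F\<^sup>*\<close> into \<open>K - {0}\<close> with fibres of the size of its kernel; as
  \<open>q\<^sup>2 - 1 = (q - 1)(q + 1)\<close> and the image and kernel are root sets of polynomials of degrees \<open>q - 1\<close>
  and \<open>q + 1\<close>, both bounds are attained.\<close>
lemma norm_kernel_and_image:
  shows "card {k::'a. k ^ (q + 1) = 1} = q + 1"
    and "(\<lambda>x::'a. x ^ (q + 1)) ` (UNIV - {0}) = K - {0}"
    and "card K = q"
proof -
  define ker where "ker = {k::'a. k ^ (q + 1) = 1}"
  define im where "im = (\<lambda>x::'a. x ^ (q + 1)) ` (UNIV - {0})"
  have "im \<subseteq> K - {0}" unfolding im_def using norm_in_K by auto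
  have card_K_minus_0: "card (K - {0}) \<le> q - 1"
    unfolding K_minus_0_eq by (rule card_roots_power_le) (use one_less_q in linarith)
  have "UNIV - {0} = (\<Union>y\<in>im. {x. x ^ (q + 1) = y})" unfolding im_def by auto
  then have "card (UNIV - {0::'a}) = (\<Sum>y\<in>im. card {x. x ^ (q + 1) = y})"
    by (simp add: card_UN_disjoint disjoint_iff)
  also have "\<dots> = (\<Sum>y\<in>im. card ker)"
  proof (rule sum.cong)
    fix y assume "y \<in> im"
    then obtain x\<^sub>0 where "x\<^sub>0 \<noteq> 0" "y = x\<^sub>0 ^ (q + 1)" unfolding im_def by auto
    then show "card {x. x ^ (q + 1) = y} = card ker"
      unfolding ker_def using norm_fibre_eq by (simp add: card_image inj_on_def)
  qed simp
  also have "\<dots> = card im * card ker" by simp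
  also have "card (UNIV - {0::'a}) = (q - 1) * (q + 1)"
    using card_UNIV_eq_q_mult_q one_less_q by (cases q) (simp_all add: card_Diff_singleton)
  finally have "card im * card ker = (q - 1) * (q + 1)" ..
  moreover have "card im \<le> q - 1"
    using card_mono[OF finite \<open>im \<subseteq> K - {0}\<close>] card_K_minus_0 by simp
  moreover have "card ker \<le> q + 1" unfolding ker_def by (rule card_roots_power_le) simp
  moreover have "(q - 1) * (q + 1) > 0" using one_less_q by simp
  ultimately have "card im = q - 1" "card ker = q + 1" by (metis nat_mult_eq_imp_eq_if_le)+
  then show "card {k::'a. k ^ (q + 1) = 1} = q + 1" unfolding ker_def by simp
  have "card (K - {0}) \<le> card im" using card_K_minus_0 \<open>card im = q - 1\<close> by simp
  with \<open>im \<subseteq> K - {0}\<close> have "im = K - {0}" by (simp add: card_seteq)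
  then show "(\<lambda>x::'a. x ^ (q + 1)) ` (UNIV - {0}) = K - {0}" unfolding im_def .
  have "0 \<in> K" unfolding K_def using one_less_q by (simp add: power_0_left)
  with \<open>im = K - {0}\<close> \<open>card im = q - 1\<close> show "card K = q"
    using one_less_q by (simp add: card_Diff_singleton)
qed

lemma card_K_tr_eq_0: "card {y\<in>K. tr r y = 0} = 2 ^ (r - 1)"
proof (rule card_tr_fibres(1)[OF CHAR_2 finite])
  show "x + y \<in> K" if "x \<in> K" "y \<in> K" for x y using that unfolding K_def by (simp add: power_q_add)
qed (use norm_kernel_and_image(3) r_ge_1 in \<open>simp_all add: K_def\<close>)

lemma card_D: "card D = 2 ^ (r - 1) * (2 ^ r - 1)"
proof -
  define Z where "Z = {y\<in>K - {0}. tr r y = 0}"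
  have "D = insert 0 (\<Union>y\<in>Z. {x. x ^ (q + 1) = y})"
    unfolding D_def Z_def using norm_kernel_and_image(2) by (auto simp: power_0_left)
  moreover have "0 \<notin> (\<Union>y\<in>Z. {x. x ^ (q + 1) = y})" unfolding Z_def by (auto simp: power_0_left)
  ultimately have "card D = Suc (\<Sum>y\<in>Z. card {x. x ^ (q + 1) = y})"
    by (simp add: card_UN_disjoint disjoint_iff)
  also have "(\<Sum>y\<in>Z. card {x::'a. x ^ (q + 1) = y}) = (\<Sum>y\<in>Z. q + 1)"
  proof (rule sum.cong)
    fix y assume "y \<in> Z"
    then have "y \<in> (\<lambda>x::'a. x ^ (q + 1)) ` (UNIV - {0})"
      unfolding Z_def norm_kernel_and_image(2) by simp
    then obtain x\<^sub>0 where "x\<^sub>0 \<noteq> 0" "y = x\<^sub>0 ^ (q + 1)" by auto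
    then show "card {x. x ^ (q + 1) = y} = q + 1"
      using norm_fibre_eq norm_kernel_and_image(1) by (simp add: card_image inj_on_def)
  qed simp
  also have "\<dots> = card Z * (q + 1)" by simp
  finally have "card D = Suc (card Z * (q + 1))" .
  moreover have "card Z = 2 ^ (r - 1) - 1"
  proof -
    have "Z = {y\<in>K. tr r y = 0} - {0}" unfolding Z_def by auto
    moreover have "0 \<in> {y\<in>K. tr r y = 0}" unfolding K_def using one_less_q by (simp add: power_0_left)
    ultimately show ?thesis using card_K_tr_eq_0 by (simp add: card_Diff_singleton)
  qed
  moreover obtain p where "(2::nat) ^ (r - 1) = Suc p"
    using not0_implies_Suc[of "2 ^ (r - 1)"] by auto
  moreover have "(2::nat) ^ r = 2 * 2 ^ (r - 1)" using q_eq .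
  ultimately show ?thesis by (simp add: algebra_simps)
qed

lemma translate_in_D_iff:
  "x + c \<in> D \<longleftrightarrow> (x \<in> D \<longleftrightarrow> B c x = Q c)"
proof -
  have "Q (x + c) = Q x + (Q c + B c x)" using Q_add[of x c] B_comm[of x c] by (simp add: add.assoc)
  moreover have "Q c + B c x = 0 \<longleftrightarrow> B c x = Q c"
    using add_eq_0_iff_CHAR_2[OF CHAR_2, of "Q c" "B c x"] by auto
  ultimately show ?thesis
    unfolding D_eq using Q_eq_0_or_1[of x] Q_eq_0_or_1[of c] B_eq_0_or_1[of c x]
      add_self_CHAR_2[OF CHAR_2, of 1] by auto
qed

text \<open>The translate \<open>{x. x + c \<in> D}\<close> has as many elements as \<open>D\<close>, agrees with \<open>D\<close> on
  \<open>{B c = Q c}\<close> and with its complement on \<open>{B c \<noteq> Q c}\<close>; so \<open>D\<close> contains half of the latter.\<close>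
lemma card_D_B_ne_Q:
  assumes "c \<noteq> 0"
  shows "card {x\<in>D. B c x \<noteq> Q c} = 2 ^ (m - 2)"
proof -
  define P where "P = {x. B c x \<noteq> Q c}"
  define T where "T = {x. x + c \<in> D}"
  have "P = UNIV - {x. B c x = Q c}" unfolding P_def by auto
  then have "card P = 2 ^ m - 2 ^ (m - 1)"
    using card_B_fibre[OF assms Q_eq_0_or_1] card_UNIV by (simp add: card_Diff_subset)
  also have "\<dots> = 2 * 2 ^ (m - 2)"
  proof -
    obtain k where "m = k + 2" using m_eq r_ge_1 le_Suc_ex[of 2 m] by (auto simp: add.commute)
    then show ?thesis by simp
  qed
  finally have card_P: "card P = 2 * 2 ^ (m - 2)" .
  have "bij_betw (\<lambda>x. x + c) T D"
    by (rule bij_betw_byWitness[where f'="\<lambda>x. x + c"])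
      (auto simp: T_def add_add_self_CHAR_2[OF CHAR_2])
  then have "card T = card D" by (rule bij_betw_same_card)
  moreover have "T - P = D - P" "T \<inter> P = P - D"
    unfolding T_def P_def using translate_in_D_iff by auto
  ultimately have "card (D \<inter> P) + card (D - P) = card (P - D) + card (D - P)"
    using card_Int_Diff[of D P] card_Int_Diff[of T P] by simp
  then have "card (D \<inter> P) = card P - card (D \<inter> P)"
    using card_Diff_subset_Int[of P D] by (simp add: Int_commute)
  with card_P have "card (D \<inter> P) = 2 ^ (m - 2)" by linarith
  moreover have "{x\<in>D. B c x \<noteq> Q c} = D \<inter> P" unfolding P_def by auto
  ultimately show ?thesis by simp
qed

lemma card_D_inter_translate:
  assumes "c \<noteq> 0"
  shows "card {x\<in>D. x + c \<in> D} = card D - 2 ^ (m - 2)"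
proof -
  have "{x\<in>D. x + c \<in> D} = D - {x\<in>D. B c x \<noteq> Q c}" using translate_in_D_iff by auto
  then show ?thesis using card_D_B_ne_Q[OF assms] by (simp add: card_Diff_subset)
qed

section \<open>The code of the quadric and its dual\<close>

abbreviation \<kappa> :: nat where "\<kappa> \<equiv> card D - 2 ^ (m - 2)"

lemma power_m_minus_2_eq: "(2::nat) ^ (m - 2) = 2 ^ (r - 1) * 2 ^ (r - 1)"
proof -
  have "m - 2 = (r - 1) + (r - 1)" using m_eq r_ge_1 by simp
  then show ?thesis by (simp add: power_add)
qed

lemma kappa_eq: "\<kappa> = 2 ^ (r - 1) * (2 ^ (r - 1) - 1)"
  unfolding card_D power_m_minus_2_eq using q_eq
  by (simp add: diff_mult_distrib2 algebra_simps)

definition word :: "'a \<Rightarrow> 'a \<Rightarrow> 'a \<Rightarrow> 'a" where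
  "word u e = (\<lambda>x. if x \<in> D then B u x + e else 0)"

lemma trace_code_eq: "trace_code m D = (\<lambda>(u, e). word u e) ` (UNIV \<times> {0, 1})"
proof -
  have "(\<lambda>x. if x \<in> D then tr m (b * x) + e else 0) = word (b ^ q) e" for b e
    unfolding word_def B_def power_q_power_q ..
  moreover have "word u e = word ((u ^ q) ^ q) e" for u e by (simp only: power_q_power_q)
  ultimately show ?thesis unfolding trace_code_def by force
qed

lemma supp_word:
  assumes "e = 0 \<or> e = 1"
  shows "supp D (word u e) = {x\<in>D. B u x \<noteq> e}"
  unfolding supp_def word_def using add_eq_0_iff_CHAR_2[OF CHAR_2] by auto

lemma supp_word_ne_Q: "supp D (word u (Q u + 1)) = {x\<in>D. x + u \<in> D}"
proof -
  have "B u x \<noteq> Q u + 1 \<longleftrightarrow> B u x = Q u" for x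
    using eq_Q_add_1_iff[OF B_eq_0_or_1] by simp
  then show ?thesis using supp_word[OF Q_add_1_eq_0_or_1] translate_in_D_iff by auto
qed

lemma wt_word:
  assumes "u \<noteq> 0" "e = 0 \<or> e = 1"
  shows "wt D (word u e) = (if e = Q u then 2 ^ (m - 2) else \<kappa>)"
proof (cases "e = Q u")
  case True
  then show ?thesis unfolding wt_def supp_word[OF assms(2)] using card_D_B_ne_Q[OF assms(1)] by simp
next
  case False
  then have "e = Q u + 1" using eq_Q_add_1_iff[OF assms(2)] by simp
  then show ?thesis
    using False card_D_inter_translate[OF assms(1)] supp_word_ne_Q[of u] by (simp add: wt_def)
qed

lemma wt_word_0: "wt D (word 0 0) = 0" "wt D (word 0 1) = card D"
  using supp_word[of 0 0] supp_word[of 1 0] by (simp_all add: wt_def)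

lemma word_add: "word (u + u') (e + e') = (\<lambda>x. word u e x + word u' e' x)"
  unfolding word_def B_add_left by (simp add: fun_eq_iff algebra_simps)

lemma bword_word:
  assumes "e = 0 \<or> e = 1"
  shows "bword D (word u e)"
proof -
  have "B u x + e \<in> {0, 1}" for x
    using B_eq_0_or_1[of u x] assms add_self_CHAR_2[OF CHAR_2, of 1] by auto
  then show ?thesis unfolding bword_def word_def by simp
qed

lemma card_pairs_through_shift_blocks:
  assumes "x \<in> D" "y \<in> D" "x \<noteq> y"
  shows "card {u. u \<noteq> 0 \<and> x + u \<in> D \<and> y + u \<in> D} = \<kappa> - 1"
proof -
  define s where "s = x + y"
  have "s \<noteq> 0" unfolding s_def using assms(3) by (simp add: add_eq_0_iff_CHAR_2[OF CHAR_2])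
  have shift: "y + u = u + x + s" for u
    unfolding s_def by (metis add.assoc add.commute add_add_self_CHAR_2[OF CHAR_2])
  have "bij_betw (\<lambda>u. u + x) {u. u \<noteq> 0 \<and> x + u \<in> D \<and> y + u \<in> D} ({w\<in>D. w + s \<in> D} - {x})"
  proof (rule bij_betw_byWitness[where f'="\<lambda>w. w + x"])
    show "(\<lambda>u. u + x) ` {u. u \<noteq> 0 \<and> x + u \<in> D \<and> y + u \<in> D} \<subseteq> {w\<in>D. w + s \<in> D} - {x}"
    proof (intro image_subsetI)
      fix u assume u: "u \<in> {u. u \<noteq> 0 \<and> x + u \<in> D \<and> y + u \<in> D}"
      then have "u + x \<in> D" by (simp add: add.commute)
      moreover have "u + x + s \<in> D" using u unfolding shift by simp
      moreover have "u + x \<noteq> x" using u by simp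
      ultimately show "u + x \<in> {w\<in>D. w + s \<in> D} - {x}" by simp
    qed
    show "(\<lambda>w. w + x) ` ({w\<in>D. w + s \<in> D} - {x}) \<subseteq> {u. u \<noteq> 0 \<and> x + u \<in> D \<and> y + u \<in> D}"
    proof (intro image_subsetI)
      fix w assume w: "w \<in> {w\<in>D. w + s \<in> D} - {x}"
      then have "w + x \<noteq> 0" by (simp add: add_eq_0_iff_CHAR_2[OF CHAR_2])
      moreover have "x + (w + x) \<in> D"
        using w by (metis DiffD1 mem_Collect_eq add.commute add_add_self_CHAR_2[OF CHAR_2])
      moreover have "y + (w + x) \<in> D"
        using w by (metis DiffD1 mem_Collect_eq shift add_add_self_CHAR_2[OF CHAR_2])
      ultimately show "w + x \<in> {u. u \<noteq> 0 \<and> x + u \<in> D \<and> y + u \<in> D}" by blast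
    qed
  qed (simp_all add: add_add_self_CHAR_2[OF CHAR_2])
  then have "card {u. u \<noteq> 0 \<and> x + u \<in> D \<and> y + u \<in> D} = card ({w\<in>D. w + s \<in> D} - {x})"
    by (rule bij_betw_same_card)
  moreover have "x + s = y" unfolding s_def by (metis add.assoc add_self_CHAR_2[OF CHAR_2] add_0)
  ultimately show ?thesis
    using card_D_inter_translate[OF \<open>s \<noteq> 0\<close>] assms by (simp add: card_Diff_singleton)
qed

lemma holds_design_dual_trace_code:
  "holds_design D (dual_code D (trace_code m D)) 2 (card D) 4 ((\<kappa> - 2) div 2)"
  unfolding holds_design_def is_design_def supp_weight_4_dual_trace_code
proof (intro conjI allI impI ballI)
  fix T assume "T \<subseteq> D \<and> card T = 2"
  then obtain x y where T: "T = {x, y}" "x \<noteq> y" "x \<in> D" "y \<in> D" by (metis card_2_iff insert_subset)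
  have "x + y \<noteq> 0" using T(2) by (simp add: add_eq_0_iff_CHAR_2[OF CHAR_2])
  then have "2 * card {S \<in> even_zero_sum_subsets D. card S = 4 \<and> {x, y} \<subseteq> S} = \<kappa> - 2"
    using card_even_zero_sum_4_through_pair[OF CHAR_2 finite T(3,4,2)]
      card_D_inter_translate[of "x + y"] by simp
  moreover have "{b \<in> {S \<in> even_zero_sum_subsets D. card S = 4}. T \<subseteq> b}
      = {S \<in> even_zero_sum_subsets D. card S = 4 \<and> {x, y} \<subseteq> S}"
    unfolding T by auto
  ultimately show "card {b \<in> {S \<in> even_zero_sum_subsets D. card S = 4}. T \<subseteq> b} = (\<kappa> - 2) div 2"
    by simp
qed (auto simp: even_zero_sum_subsets_def)

lemma kappa_minus_1_eq: "\<kappa> - 1 = 2 ^ (2 * r - 2) - 2 ^ (r - 1) - 1"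
proof -
  have "(2::nat) ^ (2 * r - 2) = 2 ^ (r - 1) * 2 ^ (r - 1)"
    using power_m_minus_2_eq m_eq by simp
  then show ?thesis unfolding kappa_eq by (simp add: diff_mult_distrib2)
qed

lemma kappa_minus_2_div_2_eq:
  assumes "2 \<le> r"
  shows "(\<kappa> - 2) div 2 = 2 ^ (2 * r - 3) - 2 ^ (r - 2) - 1"
proof -
  define g where "g = (2::nat) ^ (r - 2)"
  have "r - 1 = Suc (r - 2)" "2 * r - 3 = Suc ((r - 2) + (r - 2))" using assms by simp_all
  then have "(2::nat) ^ (r - 1) = 2 * g" "(2::nat) ^ (2 * r - 3) = 2 * g * g"
    unfolding g_def by (simp_all only: power_Suc power_add mult.assoc)
  moreover have "g \<ge> 1" unfolding g_def by simp
  ultimately show ?thesis unfolding kappa_eq g_def[symmetric] by (cases g) (simp_all add: algebra_simps)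
qed

context
  assumes r_ge_2: "2 \<le> r"
begin

lemma kappa_bounds: "0 < \<kappa>" "\<kappa> < 2 ^ (m - 2)" "2 ^ (m - 2) < card D"
proof -
  have "(2::nat) ^ 1 \<le> 2 ^ (r - 1)" using r_ge_2 by (intro power_increasing) auto
  then obtain h where h: "(2::nat) ^ (r - 1) = h + 2"
    using that[of "2 ^ (r - 1) - 2"] by simp
  show "0 < \<kappa>" "\<kappa> < 2 ^ (m - 2)" "2 ^ (m - 2) < card D"
    unfolding kappa_eq power_m_minus_2_eq card_D q_eq h by (simp_all add: algebra_simps)
qed

lemma word_eq_word_iff:
  assumes "e = 0 \<or> e = 1" "e' = 0 \<or> e' = 1"
  shows "word u e = word u' e' \<longleftrightarrow> u = u' \<and> e = e'"
proof
  assume eq: "word u e = word u' e'"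
  have "word (u + u') (e + e') = (\<lambda>_. 0)"
    unfolding word_add eq by (simp add: add_self_CHAR_2[OF CHAR_2])
  then have "wt D (word (u + u') (e + e')) = 0" by (simp add: wt_def supp_def)
  moreover have "e + e' = 0 \<or> e + e' = 1" using assms add_self_CHAR_2[OF CHAR_2, of 1] by auto
  ultimately have "u + u' = 0" using wt_word[of "u + u'" "e + e'"] kappa_bounds by (metis not_less0)
  then have "u = u'" by (simp add: add_eq_0_iff_CHAR_2[OF CHAR_2])
  moreover have "0 \<in> D" unfolding D_eq by simp
  then have "e = e'" using fun_cong[OF eq, of 0] unfolding word_def B_def by simp
  ultimately show "u = u' \<and> e = e'" by simp
qed simp

lemma card_trace_code: "card (trace_code m D) = 2 ^ (m + 1)"
proof -
  have "inj_on (\<lambda>(u, e). word u e) (UNIV \<times> {0, 1})"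
    by (auto intro!: inj_onI simp: word_eq_word_iff)
  then show ?thesis unfolding trace_code_eq using card_UNIV by (simp add: card_image card_cartesian_product)
qed

lemma weight_enum_trace_code:
  "weight_enum D (trace_code m D)
     = 1 + monom (2 ^ m - 1) \<kappa> + monom (2 ^ m - 1) (2 ^ (m - 2)) + monom 1 (card D)"
proof -
  have inj: "inj_on (\<lambda>(u, e). word u e) (UNIV \<times> {0, 1})"
    by (auto intro!: inj_onI simp: word_eq_word_iff)
  define g where "g u = (monom 1 (wt D (word u 0)) + monom 1 (wt D (word u 1)) :: int poly)" for u
  have "weight_enum D (trace_code m D) = (\<Sum>(u, e)\<in>UNIV \<times> {0, 1}. monom 1 (wt D (word u e)))"
    unfolding weight_enum_def trace_code_eq sum.reindex[OF inj] by (simp add: comp_def case_prod_unfold)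
  also have "\<dots> = (\<Sum>u\<in>UNIV. g u)"
    unfolding sum.cartesian_product[symmetric] g_def by (simp add: add.commute)
  also have "\<dots> = g 0 + (\<Sum>u\<in>UNIV - {0}. g u)" by (simp add: sum.remove)
  also have "(\<Sum>u\<in>UNIV - {0}. g u) = (\<Sum>u\<in>UNIV - {0::'a}. monom 1 \<kappa> + monom 1 (2 ^ (m - 2)))"
  proof (rule sum.cong)
    fix u :: 'a assume "u \<in> UNIV - {0}"
    then show "g u = monom 1 \<kappa> + monom 1 (2 ^ (m - 2))"
      unfolding g_def using wt_word[of u 0] wt_word[of u 1] Q_eq_0_or_1[of u] by (auto simp: add.commute)
  qed simp
  also have "\<dots> = of_nat (2 ^ m - 1) * (monom 1 \<kappa> + monom 1 (2 ^ (m - 2)))"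
    using card_UNIV by (simp add: card_Diff_singleton)
  also have "\<dots> = monom (2 ^ m - 1) \<kappa> + monom (2 ^ m - 1) (2 ^ (m - 2))"
  proof -
    have "(of_nat (2 ^ m - 1) :: int) = 2 ^ m - 1" by (simp add: of_nat_diff)
    then have "(of_nat (2 ^ m - 1) :: int poly) = monom (2 ^ m - 1) 0"
      by (metis of_nat_monom)
    then show ?thesis by (simp add: distrib_left mult_monom)
  qed
  also have "g 0 = 1 + monom 1 (card D)" unfolding g_def using wt_word_0 by (simp add: monom_0 one_pCons)
  finally show ?thesis by (simp add: algebra_simps)
qed

lemma trace_code_mem_iff: "c \<in> trace_code m D \<longleftrightarrow> (\<exists>u e. (e = 0 \<or> e = 1) \<and> c = word u e)"
  unfolding trace_code_eq by auto

lemma word_eq_0_iff: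
  assumes "e = 0 \<or> e = 1"
  shows "word u e = (\<lambda>_. 0) \<longleftrightarrow> u = 0 \<and> e = 0"
proof -
  have "word 0 0 = (\<lambda>_. 0)" unfolding word_def B_def by (simp add: fun_eq_iff power_0_left)
  then show ?thesis using word_eq_word_iff[OF assms, of 0 u 0] by simp
qed

lemma min_dist_trace_code: "min_dist D (trace_code m D) = \<kappa>"
proof -
  define W where "W = {wt D c | c. c \<in> trace_code m D \<and> c \<noteq> (\<lambda>_. 0)}"
  have "W \<subseteq> {\<kappa>, 2 ^ (m - 2), card D}"
  proof
    fix w assume "w \<in> W"
    then obtain u e where "e = 0 \<or> e = 1" "w = wt D (word u e)" "\<not> (u = 0 \<and> e = 0)"
      unfolding W_def trace_code_mem_iff using word_eq_0_iff by blast
    then show "w \<in> {\<kappa>, 2 ^ (m - 2), card D}" using wt_word wt_word_0 by (cases "u = 0") auto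
  qed
  moreover have "\<kappa> \<in> W"
  proof -
    have "wt D (word 1 (Q 1 + 1)) = \<kappa>" "word 1 (Q 1 + 1) \<noteq> (\<lambda>_. 0)"
      using wt_word[OF _ Q_add_1_eq_0_or_1] word_eq_0_iff[OF Q_add_1_eq_0_or_1] Q_add_1_neq_Q
      by simp_all
    moreover have "word 1 (Q 1 + 1) \<in> trace_code m D"
      unfolding trace_code_mem_iff using Q_add_1_eq_0_or_1 by blast
    ultimately show ?thesis unfolding W_def by (intro CollectI exI[of _ "word 1 (Q 1 + 1)"]) simp
  qed
  ultimately have "Min W = \<kappa>" using kappa_bounds by (intro Min_eqI) (auto intro: finite_subset)
  then show ?thesis unfolding min_dist_def W_def .
qed

lemma min_weight_words:
  "{c \<in> trace_code m D. wt D c = \<kappa>} = (\<lambda>u. word u (Q u + 1)) ` (UNIV - {0})"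
proof (intro equalityI subsetI)
  fix c assume "c \<in> {c \<in> trace_code m D. wt D c = \<kappa>}"
  then obtain u e where e: "e = 0 \<or> e = 1" and c: "c = word u e" "wt D (word u e) = \<kappa>"
    unfolding trace_code_mem_iff by blast
  have "u \<noteq> 0" using c(2) e wt_word_0 kappa_bounds by (cases "u = 0") auto
  then have "e \<noteq> Q u" using c(2) wt_word[OF _ e] kappa_bounds by auto
  then have "e = Q u + 1" using eq_Q_add_1_iff[OF e] by simp
  with c \<open>u \<noteq> 0\<close> show "c \<in> (\<lambda>u. word u (Q u + 1)) ` (UNIV - {0})" by simp
next
  fix c assume "c \<in> (\<lambda>u. word u (Q u + 1)) ` (UNIV - {0})"
  then obtain u where u: "u \<noteq> 0" "c = word u (Q u + 1)" by blast
  have "c \<in> trace_code m D" unfolding trace_code_mem_iff u(2) using Q_add_1_eq_0_or_1 by blast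
  moreover have "wt D c = \<kappa>"
    unfolding u(2) using wt_word[OF u(1) Q_add_1_eq_0_or_1] Q_add_1_neq_Q by simp
  ultimately show "c \<in> {c \<in> trace_code m D. wt D c = \<kappa>}" by simp
qed

lemma inj_on_shift_block: "inj_on (\<lambda>u. {x\<in>D. x + u \<in> D}) (UNIV - {0})"
proof (rule inj_onI)
  fix u u' assume "{x\<in>D. x + u \<in> D} = {x\<in>D. x + u' \<in> D}"
  then have "supp D (word u (Q u + 1)) = supp D (word u' (Q u' + 1))" by (simp add: supp_word_ne_Q)
  then have "word u (Q u + 1) = word u' (Q u' + 1)"
    using inj_on_supp_bword[of D] bword_word[OF Q_add_1_eq_0_or_1] by (auto dest: inj_onD)
  then show "u = u'" using word_eq_word_iff[OF Q_add_1_eq_0_or_1 Q_add_1_eq_0_or_1] by simp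
qed

lemma holds_design_trace_code: "holds_design D (trace_code m D) 2 (card D) \<kappa> (\<kappa> - 1)"
  unfolding holds_design_def is_design_def
proof (intro conjI allI impI ballI)
  show "b \<subseteq> D" "card b = \<kappa>" if "b \<in> supp D ` {c \<in> trace_code m D. wt D c = \<kappa>}" for b
    using that unfolding supp_def wt_def by auto
  fix T assume "T \<subseteq> D \<and> card T = 2"
  then obtain x y where T: "T = {x, y}" "x \<noteq> y" "x \<in> D" "y \<in> D" by (metis card_2_iff insert_subset)
  have "supp D ` {c \<in> trace_code m D. wt D c = \<kappa>} = (\<lambda>u. {x\<in>D. x + u \<in> D}) ` (UNIV - {0})"
    unfolding min_weight_words image_image supp_word_ne_Q ..
  then have "{b \<in> supp D ` {c \<in> trace_code m D. wt D c = \<kappa>}. T \<subseteq> b}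
      = (\<lambda>u. {x\<in>D. x + u \<in> D}) ` {u. u \<noteq> 0 \<and> x + u \<in> D \<and> y + u \<in> D}"
    unfolding T using T(3,4) by auto
  moreover have "inj_on (\<lambda>u. {x\<in>D. x + u \<in> D}) {u. u \<noteq> 0 \<and> x + u \<in> D \<and> y + u \<in> D}"
    by (rule inj_on_subset[OF inj_on_shift_block]) auto
  ultimately show "card {b \<in> supp D ` {c \<in> trace_code m D. wt D c = \<kappa>}. T \<subseteq> b} = \<kappa> - 1"
    using card_pairs_through_shift_blocks[OF T(3,4,2)] by (simp add: card_image)
qed simp_all

lemma card_dual_trace_code: "card (dual_code D (trace_code m D)) = 2 ^ (card D - m - 1)"
proof -
  have "0 \<in> D" unfolding D_eq by simp
  moreover have "\<exists>z\<in>D. z + s \<in> D" if "s \<noteq> 0" for s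
  proof (rule ccontr)
    assume "\<not> (\<exists>z\<in>D. z + s \<in> D)"
    then have "{z\<in>D. z + s \<in> D} = {}" by blast
    with card_D_inter_translate[OF that] kappa_bounds(1) show False by simp
  qed
  ultimately have "card (even_zero_sum_subsets D) = 2 ^ (card D - m - 1)"
    by (rule card_even_zero_sum_subsets)
  moreover have "inj_on (indicator :: 'a set \<Rightarrow> 'a \<Rightarrow> 'a) (even_zero_sum_subsets D)"
  proof (rule inj_onI)
    fix S T :: "'a set" assume "(indicator S :: 'a \<Rightarrow> 'a) = indicator T"
    then show "S = T" by (metis indicator_eq_1_iff subsetI subset_antisym)
  qed
  ultimately show ?thesis unfolding dual_trace_code by (simp add: card_image)
qed

end

lemma min_dist_dual_code_eq_4:
  assumes "3 \<le> r"
  shows "min_dist D (dual_code D (trace_code m D)) = 4"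
proof (rule min_dist_dual_trace_code)
  have "(2::nat) ^ 2 \<le> 2 ^ (r - 1)" using assms by (intro power_increasing) auto
  then obtain h where "(2::nat) ^ (r - 1) = h + 4" using that[of "2 ^ (r - 1) - 4"] by simp
  then have "2 < \<kappa>" unfolding kappa_eq by (simp add: algebra_simps)
  have "0 \<in> D" unfolding D_eq by simp
  have "D - {0} \<noteq> {}"
  proof
    assume "D - {0} = {}"
    then have "D \<subseteq> {0}" by blast
    then have "card D \<le> 1" using card_mono[of "{0}" D] by simp
    with \<open>2 < \<kappa>\<close> show False by linarith
  qed
  then obtain y where "y \<in> D" "y \<noteq> 0" by blast
  then have "2 * card {S \<in> even_zero_sum_subsets D. card S = 4 \<and> {0, y} \<subseteq> S} = \<kappa> - 2"
    using card_even_zero_sum_4_through_pair[OF CHAR_2 finite \<open>0 \<in> D\<close>, of y]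
      card_D_inter_translate[of y] by simp
  with \<open>2 < \<kappa>\<close> have "card {S \<in> even_zero_sum_subsets D. card S = 4 \<and> {0, y} \<subseteq> S} \<noteq> 0"
    by linarith
  then have "{S \<in> even_zero_sum_subsets D. card S = 4 \<and> {0, y} \<subseteq> S} \<noteq> {}" by auto
  then show "\<exists>S\<in>even_zero_sum_subsets D. card S = 4" by blast
qed

end

theorem corollary3p9:
  fixes r m :: nat and D :: "'a::{field,finite} set" and C :: "('a \<Rightarrow> 'a) set"
  assumes "r \<ge> 3" and "m = 2 * r" and "card (UNIV :: 'a set) = 2 ^ m"
    and "D = {x. tr r (x ^ (2 ^ r + 1)) = 0}"
    and "C = {(\<lambda>x. if x \<in> D then tr m (b * x) + c else 0) | b c. c \<in> {0, 1}}"
  shows "has_params D C (2^(r-1) * (2^r - 1)) (m + 1) (2^(r-1) * (2^(r-1) - 1))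
    \<and> weight_enum D C = 1 + monom (2^(2*r) - 1) (2^(r-1) * (2^(r-1) - 1))
                          + monom (2^(2*r) - 1) (2^(2*r-2))
                          + monom 1 (2^(r-1) * (2^r - 1))
    \<and> has_params D (dual_code D C) (2^(r-1) * (2^r - 1)) (2^(r-1) * (2^r - 1) - m - 1) 4
    \<and> holds_design D C 2 (2^(r-1) * (2^r - 1)) (2^(r-1) * (2^(r-1) - 1))
        (2^(2*r-2) - 2^(r-1) - 1)
    \<and> holds_design D (dual_code D C) 2 (2^(r-1) * (2^r - 1)) 4
        (2^(2*r-3) - 2^(r-2) - 1)"
proof -
  interpret trace_quadric m D r
    using assms(2-4) by unfold_locales
  have C: "C = trace_code m D" unfolding assms(5) trace_code_def ..
  have "2 \<le> r" using assms(1) by simp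
  show ?thesis
    unfolding C has_params_def card_D[symmetric] kappa_eq[symmetric] kappa_minus_1_eq[symmetric]
      kappa_minus_2_div_2_eq[OF \<open>2 \<le> r\<close>, symmetric]
    using card_trace_code[OF \<open>2 \<le> r\<close>] min_dist_trace_code[OF \<open>2 \<le> r\<close>]
      weight_enum_trace_code[OF \<open>2 \<le> r\<close>] card_dual_trace_code[OF \<open>2 \<le> r\<close>]
      min_dist_dual_code_eq_4[OF assms(1)] holds_design_trace_code[OF \<open>2 \<le> r\<close>]
      holds_design_dual_trace_code
    by (simp add: assms(2) algebra_simps)
qed

end
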